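(* Let $f(x)$ be a real polynomial of degree $K > 1$ with positive leading coefficient, such that all roots of $f'(x)$ are real. Let $k$ be the number of distinct roots of $f'(x)$ that are not inflection points of $f(x)$, and if $k > 0$ sort them as $\alpha_k < \cdots < \alpha_1$; set $\alpha_0 = +\infty$, $f(\alpha_0) = 1$, $\alpha_{k+1} = -\infty$, $f(\alpha_{k+1}) = (-1)^K$. Say that SIGN holds if $f(\alpha_i)f(\alpha_{i-1}) \leq 0$ for all $i = 1,\ldots,k+1$, and that MULT holds if every root $\beta$ of $f'(x)$ with $\mathrm{ord}_\beta(f'(x)) > 1$ is also a root of $f(x)$. Then: (a) $f(x)$ has only real roots if and only if SIGN and MULT hold; (b) all complex roots of $f(x)$ are real and non-negative if and only if SIGN and MULT hold, all roots of $f'(x)$ are non-negative and $(-1)^Kf(0) \geq 0$; (c) all complex roots of $f(x)$ are real and positive if and only if SIGN and MULT hold, all roots of $f'(x)$ are positive and $(-1)^Kf(0) > 0$.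
   Context: $\mathrm{ord}_\beta(g(x))$ denotes the order of vanishing of the polynomial $g$ at $\beta$. *)

theory Defs
  imports "HOL-Computational_Algebra.Polynomial" Complex_Main
begin

definition inflection_point :: "real poly \<Rightarrow> real \<Rightarrow> bool" where
  "inflection_point f x \<longleftrightarrow>
     (\<exists>e>0. ((\<forall>t\<in>{x-e<..<x}. poly (pderiv (pderiv f)) t > 0) \<and>
              (\<forall>t\<in>{x<..<x+e}. poly (pderiv (pderiv f)) t < 0)) \<or>
             ((\<forall>t\<in>{x-e<..<x}. poly (pderiv (pderiv f)) t < 0) \<and>
              (\<forall>t\<in>{x<..<x+e}. poly (pderiv (pderiv f)) t > 0)))"

definition crit_noninfl :: "real poly \<Rightarrow> real set" where
  "crit_noninfl f = {x. poly (pderiv f) x = 0 \<and> \<not> inflection_point f x}"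

text \<open>alpha f i for i = 1..k is the i-th largest element of crit_noninfl f
  (so alpha_k < ... < alpha_1).\<close>
definition alpha :: "real poly \<Rightarrow> nat \<Rightarrow> real" where
  "alpha f i = rev (sorted_list_of_set (crit_noninfl f)) ! (i - 1)"

definition fval :: "real poly \<Rightarrow> nat \<Rightarrow> real" where
  "fval f i = (if i = 0 then 1
               else if i = card (crit_noninfl f) + 1 then (-1) ^ degree f
               else poly f (alpha f i))"

definition SIGN :: "real poly \<Rightarrow> bool" where
  "SIGN f \<longleftrightarrow> (\<forall>i\<in>{1..card (crit_noninfl f) + 1}. fval f i * fval f (i - 1) \<le> 0)"

definition MULT :: "real poly \<Rightarrow> bool" where
  "MULT f \<longleftrightarrow> (\<forall>\<beta>::real. poly (pderiv f) \<beta> = 0 \<and> order \<beta> (pderiv f) > 1 \<longrightarrow> poly f \<beta> = 0)"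

end

theory Submission
  imports Defs "HOL-Computational_Algebra.Fundamental_Theorem_Algebra"
begin

(*
  Write R for the real zeros of f and G for the zeros of f' that are not zeros of f. A zero of f
  of order m is a zero of f' of order m - 1, and all deg f - 1 zeros of f' are real, hence

    sum (x in R) ord_x f  =  |R| + (deg f - 1) - sum (c in G) ord_c f'.

  So f is real-rooted iff the right-hand side is deg f, i.e. iff sum (c in G) ord_c f' = |R| - 1.

  If f is real-rooted, Rolle's theorem puts a point of G between consecutive zeros, so |G| >= |R| - 1
  and therefore every point of G is a simple zero of f' (this is MULT) and G interlaces with R.
  Simple critical points are not inflection points, so if neither of two consecutive alpha_i is a
  zero of f, exactly one zero lies between them; it has odd order (an even-order zero would itself be
  some alpha_j), so f changes sign across it: this is SIGN.

  Conversely, under MULT the points of G are exactly the alpha_i with f(alpha_i) <> 0, and SIGN with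
  the intermediate value theorem gives a zero of f in [alpha_(i+1), alpha_i) for each i <= k with
  f(alpha_i) <> 0, including i = 0. Hence |R| >= |G| + 1, which forces real-rootedness.

  For (b) and (c): if f is real-rooted and has a zero below a while all critical points are >= a, the
  least zero is simple and is the only zero <= a, so (-1)^K f(a) < 0.
*)

lemma map_poly_of_real_add:
  "map_poly (of_real :: real \<Rightarrow> 'a::real_algebra_1) (p + q) = map_poly of_real p + map_poly of_real q"
  by (intro poly_eqI) (simp add: coeff_map_poly)

lemma map_poly_of_real_eq_0_iff [simp]:
  "map_poly (of_real :: real \<Rightarrow> 'a::real_algebra_1) p = 0 \<longleftrightarrow> p = 0"
  by (simp add: map_poly_eq_0_iff)

lemma map_poly_of_real_mult:
  "map_poly (of_real :: real \<Rightarrow> 'a::{real_algebra_1,comm_ring_1}) (p * q) = map_poly of_real p * map_poly of_real q"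
  by (induction p) (auto simp: map_poly_pCons map_poly_smult map_poly_of_real_add)

lemma map_poly_of_real_power:
  "map_poly (of_real :: real \<Rightarrow> 'a::{real_algebra_1,comm_ring_1}) (p ^ n) = map_poly of_real p ^ n"
  by (induction n) (simp_all add: map_poly_of_real_mult)

lemma poly_map_poly_of_real:
  "poly (map_poly (of_real :: real \<Rightarrow> 'a::{real_algebra_1,comm_ring_1}) p) (of_real x) = of_real (poly p x)"
  by (induction p) (auto simp: map_poly_pCons)

lemma order_map_poly_of_real:
  fixes p :: "real poly"
  assumes "p \<noteq> 0"
  shows "order (complex_of_real x) (map_poly of_real p) = order x p"
proof -
  obtain q where p: "p = [:-x, 1:] ^ order x p * q" and q: "\<not> [:-x, 1:] dvd q"
    using order_decomp[OF assms] by blast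
  have "poly q x \<noteq> 0"
    using q by (simp add: poly_eq_0_iff_dvd)
  then have "order (complex_of_real x) (map_poly of_real q) = 0"
    by (intro order_0I) (simp add: poly_map_poly_of_real)
  moreover have "map_poly complex_of_real p = [:-of_real x, 1:] ^ order x p * map_poly of_real q"
    by (subst p) (simp add: map_poly_of_real_mult map_poly_of_real_power map_poly_pCons)
  moreover have "map_poly complex_of_real q \<noteq> 0"
    using \<open>poly q x \<noteq> 0\<close> by auto
  ultimately show ?thesis
    by (simp add: order_mult order_power_n_n)
qed

definition real_rooted :: "real poly \<Rightarrow> bool" where
  "real_rooted p \<longleftrightarrow> (\<forall>z::complex. poly (map_poly of_real p) z = 0 \<longrightarrow> z \<in> \<real>)"

lemma sum_order_real_roots_le_degree:
  fixes p :: "real poly"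
  assumes "p \<noteq> 0"
  shows "(\<Sum>x | poly p x = 0. order x p) \<le> degree p"
  using size_proots_le[of p] assms by (simp add: size_multiset_overloaded_eq)

lemma sum_order_real_roots_eq_degree_iff:
  fixes p :: "real poly"
  assumes "p \<noteq> 0"
  shows "(\<Sum>x | poly p x = 0. order x p) = degree p \<longleftrightarrow> real_rooted p"
proof -
  define P where "P = map_poly complex_of_real p"
  define Z where "Z = {z. poly P z = 0}"
  have P: "P \<noteq> 0" "degree P = degree p"
    using assms by (simp_all add: P_def degree_map_poly)
  have "finite Z"
    unfolding Z_def using P by (simp add: poly_roots_finite)
  have total: "(\<Sum>z\<in>Z. order z P) = degree p"
    using size_proots_complex[of P] P by (simp add: size_multiset_overloaded_eq Z_def)
  have "Z \<inter> \<real> = complex_of_real ` {x. poly p x = 0}"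
    by (auto simp: Z_def P_def poly_map_poly_of_real elim!: Reals_cases)
  then have real: "(\<Sum>x | poly p x = 0. order x p) = (\<Sum>z\<in>Z \<inter> \<real>. order z P)"
    using assms by (simp add: sum.reindex inj_on_def order_map_poly_of_real P_def)
  have "(\<Sum>z\<in>Z \<inter> \<real>. order z P) = (\<Sum>z\<in>Z. order z P) \<longleftrightarrow> (\<forall>z\<in>Z - \<real>. order z P = 0)"
    using \<open>finite Z\<close> sum.subset_diff[of "Z \<inter> \<real>" Z "\<lambda>z. order z P"]
    by (simp add: Diff_Int)
  also have "\<dots> \<longleftrightarrow> Z \<subseteq> \<real>"
    using P by (force simp: Z_def order_root)
  also have "\<dots> \<longleftrightarrow> real_rooted p"
    by (auto simp: real_rooted_def Z_def P_def)
  finally show ?thesis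
    by (simp add: real total)
qed

lemma poly_order_decomp:
  fixes p :: "'a::idom poly"
  assumes "p \<noteq> 0"
  obtains h where "\<And>x. poly p x = (x - a) ^ order a p * poly h x" "poly h a \<noteq> 0"
proof -
  obtain h where p: "p = [:-a, 1:] ^ order a p * h" and h: "\<not> [:-a, 1:] dvd h"
    using order_decomp[OF assms] by blast
  show thesis
  proof (rule that)
    show "poly p x = (x - a) ^ order a p * poly h x" for x
      by (subst p) (simp add: poly_power)
    show "poly h a \<noteq> 0"
      using h by (simp add: poly_eq_0_iff_dvd)
  qed
qed

lemma poly_pos_right_of_roots:
  fixes p :: "real poly"
  assumes "lead_coeff p > 0" and "\<forall>x\<ge>a. poly p x \<noteq> 0"
  shows "poly p a > 0"
proof (rule ccontr)
  assume "\<not> poly p a > 0"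
  with assms(2) have "poly p a < 0"
    by (metis linorder_neqE_linordered_idom order_refl)
  obtain n where n: "\<forall>x\<ge>n. poly p x \<ge> lead_coeff p"
    using poly_pinfty_gt_lc[OF assms(1)] by blast
  have "poly p (max (a + 1) n) > 0"
    using n assms(1) by (meson max.cobounded2 order_less_le_trans)
  moreover have "a < max (a + 1) n"
    by simp
  ultimately obtain x where "a < x" "poly p x = 0"
    using poly_IVT_pos[OF _ \<open>poly p a < 0\<close>] by blast
  with assms(2) show False
    by simp
qed

lemma poly_sign_left_of_roots:
  fixes p :: "real poly"
  assumes "lead_coeff p > 0" and "\<forall>x\<le>b. poly p x \<noteq> 0"
  shows "(-1) ^ degree p * poly p b > 0"
proof -
  define q where "q = smult ((-1) ^ degree p) (p \<circ>\<^sub>p [:0, -1:])"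
  have q: "poly q x = (-1) ^ degree p * poly p (-x)" for x
    by (simp add: q_def poly_pcompose)
  have "lead_coeff q = lead_coeff p"
    by (simp add: q_def lead_coeff_comp mult.assoc[symmetric] power_mult_distrib[symmetric])
  with assms have "poly q (-b) > 0"
    by (intro poly_pos_right_of_roots) (auto simp: q)
  then show ?thesis
    by (simp add: q)
qed

lemma poly_sign_change_at_odd_order_root:
  fixes p :: "real poly"
  assumes "p \<noteq> 0" "a < s" "s < b" "\<forall>x\<in>{a..b}. poly p x = 0 \<longrightarrow> x = s" "odd (order s p)"
  shows "poly p a * poly p b < 0"
proof -
  obtain h where p: "\<And>x. poly p x = (x - s) ^ order s p * poly h x" and "poly h s \<noteq> 0"
    using poly_order_decomp[OF assms(1)] by blast
  have h: "poly h x \<noteq> 0" if "x \<in> {a..b}" for x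
    using assms(4) that \<open>poly h s \<noteq> 0\<close> by (cases "x = s") (auto simp: p)
  have "poly h a * poly h b > 0"
  proof (rule ccontr)
    assume "\<not> poly h a * poly h b > 0"
    moreover have "poly h a * poly h b \<noteq> 0"
      using h assms(2,3) by simp
    ultimately obtain x where "a < x" "x < b" "poly h x = 0"
      using poly_IVT[of a b h] assms(2,3) by force
    with h show False
      by simp
  qed
  moreover have "(a - s) ^ order s p * (b - s) ^ order s p < 0"
    using assms by (simp add: mult_neg_pos power_less_zero_eq)
  moreover have "poly p a * poly p b = (poly h a * poly h b) * ((a - s) ^ order s p * (b - s) ^ order s p)"
    by (simp add: p algebra_simps)
  ultimately show ?thesis
    by (simp add: mult_pos_neg)
qed

lemma poly_no_sign_change_at_even_order_root:
  fixes p :: "real poly"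
  assumes "p \<noteq> 0" "even (order a p)"
  obtains e where "e > 0"
    "\<And>s t. s \<noteq> a \<Longrightarrow> t \<noteq> a \<Longrightarrow> \<bar>s - a\<bar> < e \<Longrightarrow> \<bar>t - a\<bar> < e \<Longrightarrow> poly p s * poly p t > 0"
proof -
  obtain h where p: "\<And>x. poly p x = (x - a) ^ order a p * poly h x" and "poly h a \<noteq> 0"
    using poly_order_decomp[OF assms(1)] by blast
  have "(\<lambda>t. poly h t * poly h a) \<midarrow>a\<rightarrow> poly h a * poly h a"
    by (intro tendsto_intros)
  moreover have "poly h a * poly h a > 0"
    using \<open>poly h a \<noteq> 0\<close> by (metis not_real_square_gt_zero)
  ultimately obtain e where "e > 0" and e: "\<And>t. t \<noteq> a \<Longrightarrow> \<bar>a - t\<bar> < e \<Longrightarrow> poly h t * poly h a > 0"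
    using LIM_fun_gt_zero by blast
  show thesis
  proof (rule that[OF \<open>e > 0\<close>])
    fix s t
    assume "s \<noteq> a" "t \<noteq> a" "\<bar>s - a\<bar> < e" "\<bar>t - a\<bar> < e"
    then have "poly h s * poly h a > 0" "poly h t * poly h a > 0"
      using e by (simp_all add: abs_minus_commute)
    then have "poly h s * poly h t > 0"
      by (simp add: zero_less_mult_iff) (use \<open>poly h a \<noteq> 0\<close> in linarith)
    moreover have "(s - a) ^ order a p * (t - a) ^ order a p > 0"
      using assms(2) \<open>s \<noteq> a\<close> \<open>t \<noteq> a\<close> by (simp add: zero_less_power_eq)
    moreover have "poly p s * poly p t = (poly h s * poly h t) * ((s - a) ^ order a p * (t - a) ^ order a p)"
      by (simp add: p algebra_simps)
    ultimately show "poly p s * poly p t > 0"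
      by simp
  qed
qed

lemma odd_order_pderiv_not_inflection_point:
  fixes f :: "real poly"
  assumes "pderiv f \<noteq> 0" "odd (order a (pderiv f))"
  shows "\<not> inflection_point f a"
proof
  assume "inflection_point f a"
  then obtain e where "e > 0" and e:
    "(\<forall>t\<in>{a-e<..<a}. poly (pderiv (pderiv f)) t > 0) \<and> (\<forall>t\<in>{a<..<a+e}. poly (pderiv (pderiv f)) t < 0) \<or>
     (\<forall>t\<in>{a-e<..<a}. poly (pderiv (pderiv f)) t < 0) \<and> (\<forall>t\<in>{a<..<a+e}. poly (pderiv (pderiv f)) t > 0)"
    unfolding inflection_point_def by blast
  have root: "poly (pderiv f) a = 0"
    using assms order_root by (metis odd_pos neq0_conv)
  have "pderiv (pderiv f) \<noteq> 0"
  proof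
    assume "pderiv (pderiv f) = 0"
    then have "pderiv f = [:poly (pderiv f) a:]"
      by (metis pderiv_eq_0_iff degree_0_id poly_0_coeff_0 poly_const_conv)
    with root assms(1) show False
      by simp
  qed
  moreover have "even (order a (pderiv (pderiv f)))"
    using order_pderiv[OF assms(1) root] assms(2) by simp
  ultimately obtain d where "d > 0" and d:
    "\<And>s t. s \<noteq> a \<Longrightarrow> t \<noteq> a \<Longrightarrow> \<bar>s - a\<bar> < d \<Longrightarrow> \<bar>t - a\<bar> < d \<Longrightarrow>
       poly (pderiv (pderiv f)) s * poly (pderiv (pderiv f)) t > 0"
    by (rule poly_no_sign_change_at_even_order_root) blast
  define m where "m = min e d / 2"
  have "m > 0" "m < e" "m < d"
    using \<open>e > 0\<close> \<open>d > 0\<close> by (auto simp: m_def)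
  then have "poly (pderiv (pderiv f)) (a - m) * poly (pderiv (pderiv f)) (a + m) > 0"
    by (intro d) auto
  moreover have "a - m \<in> {a-e<..<a}" "a + m \<in> {a<..<a+e}"
    using \<open>m > 0\<close> \<open>m < e\<close> by auto
  then have "poly (pderiv (pderiv f)) (a - m) * poly (pderiv (pderiv f)) (a + m) < 0"
    using e by (metis mult_pos_neg mult_neg_pos)
  ultimately show False
    by simp
qed

lemma poly_root_in_sign_change_interval:
  fixes p :: "real poly"
  assumes "a < b" "poly p a * poly p b \<le> 0" "poly p b \<noteq> 0"
  obtains t where "a \<le> t" "t < b" "poly p t = 0"
proof (cases "poly p a = 0")
  case False
  with assms(2,3) have "poly p a * poly p b < 0"
    by (simp add: less_le)
  then obtain t where "a < t" "t < b" "poly p t = 0"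
    using poly_IVT[OF assms(1)] by blast
  then show thesis
    using that less_imp_le by blast
qed (use assms(1) that in blast)

lemma card_nonzero_nodes_le_card_roots:
  fixes p :: "real poly" and y :: "nat \<Rightarrow> real"
  assumes "p \<noteq> 0"
    and decreasing: "\<And>i j. i < j \<Longrightarrow> j \<le> n \<Longrightarrow> y j < y i"
    and sign: "\<And>i. i < n \<Longrightarrow> poly p (y (Suc i)) * poly p (y i) \<le> 0"
  shows "card {i. i < n \<and> poly p (y i) \<noteq> 0} \<le> card ({y n..<y 0} \<inter> {t. poly p t = 0})"
proof -
  define A where "A = {i. i < n \<and> poly p (y i) \<noteq> 0}"
  have le: "y j \<le> y i" if "i \<le> j" "j \<le> n" for i j
    using decreasing[of i j] that by (cases "i = j") auto
  have "\<exists>t. y (Suc i) \<le> t \<and> t < y i \<and> poly p t = 0" if "i \<in> A" for i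
    using that decreasing[of i "Suc i"] sign[of i]
    by (metis (mono_tags) A_def lessI mem_Collect_eq Suc_leI poly_root_in_sign_change_interval)
  then obtain r where r: "\<And>i. i \<in> A \<Longrightarrow> y (Suc i) \<le> r i \<and> r i < y i \<and> poly p (r i) = 0"
    by metis
  have "inj_on r A"
  proof (rule linorder_inj_onI)
    fix i j
    assume "i < j" "i \<in> A" "j \<in> A"
    then have "r j < r i"
      using r[of i] r[of j] le[of "Suc i" j] by (auto simp: A_def)
    then show "r i \<noteq> r j"
      by simp
  qed auto
  moreover have "r i \<in> {y n..<y 0} \<inter> {t. poly p t = 0}" if "i \<in> A" for i
  proof -
    have "y n \<le> y (Suc i)" "y i \<le> y 0"
      using that le[of "Suc i" n] le[of 0 i] by (simp_all add: A_def Suc_le_eq)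
    then show ?thesis
      using r[OF that] by auto
  qed
  ultimately show ?thesis
    unfolding A_def[symmetric] using poly_roots_finite[OF assms(1)]
    by (intro card_inj_on_le) blast+
qed

lemma rev_sorted_list_of_set_nth_less:
  fixes S :: "'a::linorder set"
  assumes "finite S" "i < j" "j < card S"
  shows "rev (sorted_list_of_set S) ! j < rev (sorted_list_of_set S) ! i"
  using assms sorted_wrt_nth_less[of "(>)" "rev (sorted_list_of_set S)" i j]
  by (simp add: sorted_wrt_rev)

lemma bij_betw_rev_sorted_list_of_set_nth:
  fixes S :: "'a::linorder set"
  assumes "finite S"
  shows "bij_betw ((!) (rev (sorted_list_of_set S))) {..<card S} S"
  using assms by (intro bij_betw_nth) simp_all

lemma complex_roots_real_and_iff:
  fixes p :: "real poly"
  shows "(\<forall>z. poly (map_poly complex_of_real p) z = 0 \<longrightarrow> z \<in> \<real> \<and> P (Re z)) \<longleftrightarrow>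
    real_rooted p \<and> (\<forall>x. poly p x = 0 \<longrightarrow> P x)"
proof
  assume roots: "\<forall>z. poly (map_poly complex_of_real p) z = 0 \<longrightarrow> z \<in> \<real> \<and> P (Re z)"
  have "P x" if "poly p x = 0" for x
    using roots[rule_format, of "of_real x"] that by (simp add: poly_map_poly_of_real)
  with roots show "real_rooted p \<and> (\<forall>x. poly p x = 0 \<longrightarrow> P x)"
    by (simp add: real_rooted_def)
qed (auto simp: real_rooted_def poly_map_poly_of_real elim!: Reals_cases)

locale real_rooted_derivative =
  fixes f :: "real poly"
  assumes degree_gt_1: "degree f > 1"
    and lead_coeff_pos: "lead_coeff f > 0"
    and real_rooted_pderiv: "real_rooted (pderiv f)"
begin

definition zeros :: "real set" where
  "zeros = {x. poly f x = 0}"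

definition crits :: "real set" where
  "crits = {x. poly (pderiv f) x = 0}"

definition nonzero_crits :: "real set" where
  "nonzero_crits = crits - zeros"

lemma f_nonzero: "f \<noteq> 0"
  using degree_gt_1 by auto

lemma pderiv_nonzero: "pderiv f \<noteq> 0"
  using degree_gt_1 by (simp add: pderiv_eq_0_iff)

lemma finite_zeros: "finite zeros"
  unfolding zeros_def using f_nonzero by (rule poly_roots_finite)

lemma finite_crits: "finite crits"
  unfolding crits_def using pderiv_nonzero by (rule poly_roots_finite)

lemma crit_noninfl_subset_crits: "crit_noninfl f \<subseteq> crits"
  by (auto simp: crit_noninfl_def crits_def)

lemma finite_crit_noninfl: "finite (crit_noninfl f)"
  using finite_crits crit_noninfl_subset_crits by (rule rev_finite_subset)

lemma order_pderiv_ge_1: "c \<in> nonzero_crits \<Longrightarrow> order c (pderiv f) \<ge> 1"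
  using pderiv_nonzero order_root[of "pderiv f" c]
  by (simp add: nonzero_crits_def crits_def Suc_le_eq)

lemma sum_order_zeros_nonzero_crits:
  "(\<Sum>x\<in>zeros. order x f) + (\<Sum>c\<in>nonzero_crits. order c (pderiv f)) = card zeros + (degree f - 1)"
proof -
  have "(\<Sum>x\<in>zeros. order x f) = (\<Sum>x\<in>zeros. Suc (order x (pderiv f)))"
    using order_pderiv[OF f_nonzero] by (intro sum.cong) (auto simp: zeros_def)
  also have "\<dots> = card zeros + (\<Sum>x\<in>zeros. order x (pderiv f))"
    by (simp add: sum_Suc)
  also have "(\<Sum>x\<in>zeros. order x (pderiv f)) = (\<Sum>x\<in>zeros \<inter> crits. order x (pderiv f))"
    using finite_zeros by (intro sum.mono_neutral_right) (auto simp: crits_def order_root)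
  finally have "(\<Sum>x\<in>zeros. order x f) = card zeros + (\<Sum>x\<in>zeros \<inter> crits. order x (pderiv f))" .
  moreover have "(\<Sum>x\<in>crits. order x (pderiv f)) =
      (\<Sum>x\<in>zeros \<inter> crits. order x (pderiv f)) + (\<Sum>c\<in>nonzero_crits. order c (pderiv f))"
    using finite_crits sum.subset_diff[of "zeros \<inter> crits" crits "\<lambda>x. order x (pderiv f)"]
    by (simp add: nonzero_crits_def Diff_Int)
  moreover have "(\<Sum>x\<in>crits. order x (pderiv f)) = degree f - 1"
    using sum_order_real_roots_eq_degree_iff[OF pderiv_nonzero] real_rooted_pderiv
    by (simp add: crits_def degree_pderiv)
  ultimately show ?thesis
    by linarith
qed

definition next_zero :: "real \<Rightarrow> real" where
  "next_zero r = Min {s \<in> zeros. r < s}"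

lemma next_zero:
  assumes "r \<in> zeros" "r \<noteq> Max zeros"
  shows "next_zero r \<in> zeros" "r < next_zero r" "\<And>s. s \<in> zeros \<Longrightarrow> r < s \<Longrightarrow> next_zero r \<le> s"
proof -
  have "r < Max zeros"
    using assms finite_zeros by (simp add: order.not_eq_order_implies_strict)
  then have "{s \<in> zeros. r < s} \<noteq> {}"
    using Max_in[OF finite_zeros] assms(1) by blast
  then have "next_zero r \<in> {s \<in> zeros. r < s}"
    unfolding next_zero_def using finite_zeros by (intro Min_in) auto
  then show "next_zero r \<in> zeros" "r < next_zero r"
    by auto
  show "next_zero r \<le> s" if "s \<in> zeros" "r < s" for s
    unfolding next_zero_def using finite_zeros that by (intro Min_le) auto
qed

definition rolle_crit :: "real \<Rightarrow> real" where
  "rolle_crit r = (SOME c. c \<in> nonzero_crits \<and> r < c \<and> c < next_zero r)"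

lemma rolle_crit:
  assumes "r \<in> zeros" "r \<noteq> Max zeros"
  shows "rolle_crit r \<in> nonzero_crits" "r < rolle_crit r" "rolle_crit r < next_zero r"
proof -
  obtain c where c: "r < c" "c < next_zero r"
    and "poly f (next_zero r) - poly f r = (next_zero r - r) * poly (pderiv f) c"
    using poly_MVT next_zero(2)[OF assms] by blast
  then have "c \<in> crits"
    using assms next_zero(1,2)[OF assms] by (simp add: zeros_def crits_def)
  moreover have "c \<notin> zeros"
    using next_zero(3)[OF assms] c by force
  ultimately have "\<exists>c. c \<in> nonzero_crits \<and> r < c \<and> c < next_zero r"
    using c by (auto simp: nonzero_crits_def)
  then have "rolle_crit r \<in> nonzero_crits \<and> r < rolle_crit r \<and> rolle_crit r < next_zero r"
    unfolding rolle_crit_def by (rule someI_ex)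
  then show "rolle_crit r \<in> nonzero_crits" "r < rolle_crit r" "rolle_crit r < next_zero r"
    by auto
qed

lemma nonzero_crit_between_zeros:
  assumes "r \<in> zeros" "s \<in> zeros" "r < s"
  obtains c where "c \<in> nonzero_crits" "r < c" "c < s"
proof -
  have "r \<noteq> Max zeros"
    using assms finite_zeros by (metis Max_ge leD)
  then show thesis
    using that rolle_crit[OF assms(1)] next_zero(3)[OF assms(1) _ assms(2,3)] by fastforce
qed

lemma rolle_crit_less:
  assumes "r \<in> zeros - {Max zeros}" "s \<in> zeros - {Max zeros}" "r < s"
  shows "rolle_crit r < rolle_crit s"
  using rolle_crit[of r] rolle_crit[of s] next_zero(3)[of r s] assms by force

lemma inj_on_rolle_crit: "inj_on rolle_crit (zeros - {Max zeros})"
  by (intro inj_onI) (metis rolle_crit_less linorder_neqE_linordered_idom less_irrefl)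

lemma real_rooted_iff_sum_order_zeros: "real_rooted f \<longleftrightarrow> (\<Sum>x\<in>zeros. order x f) = degree f"
  using sum_order_real_roots_eq_degree_iff[OF f_nonzero] by (simp add: zeros_def)

lemma real_rooted_zeros_nonempty: "real_rooted f \<Longrightarrow> zeros \<noteq> {}"
  using real_rooted_iff_sum_order_zeros degree_gt_1 by auto

lemma real_rooted_interlacing:
  assumes "real_rooted f"
  shows "nonzero_crits = rolle_crit ` (zeros - {Max zeros})"
    and "\<And>c. c \<in> nonzero_crits \<Longrightarrow> order c (pderiv f) = 1"
proof -
  have sum_orders: "(\<Sum>c\<in>nonzero_crits. order c (pderiv f)) = card zeros - 1"
    using sum_order_zeros_nonzero_crits assms degree_gt_1 by (simp add: real_rooted_iff_sum_order_zeros)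
  have image: "rolle_crit ` (zeros - {Max zeros}) \<subseteq> nonzero_crits"
    using rolle_crit(1) by blast
  have card_image: "card (rolle_crit ` (zeros - {Max zeros})) = card zeros - 1"
    using card_image[OF inj_on_rolle_crit] finite_zeros real_rooted_zeros_nonempty[OF assms] by simp
  have "card nonzero_crits \<le> (\<Sum>c\<in>nonzero_crits. order c (pderiv f))"
    using sum_mono[of nonzero_crits "\<lambda>_. 1::nat"] order_pderiv_ge_1 by simp
  moreover have finite: "finite nonzero_crits"
    using finite_crits by (simp add: nonzero_crits_def)
  ultimately have card: "card nonzero_crits = card zeros - 1"
    using card_mono[OF _ image] card_image sum_orders by simp
  then show "nonzero_crits = rolle_crit ` (zeros - {Max zeros})"
    using card_subset_eq[OF finite image] card_image by simp
  show "order c (pderiv f) = 1" if "c \<in> nonzero_crits" for c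
  proof (rule ccontr)
    assume "order c (pderiv f) \<noteq> 1"
    with order_pderiv_ge_1[OF that] have "1 < order c (pderiv f)"
      by simp
    then have "(\<Sum>c\<in>nonzero_crits. 1) < (\<Sum>c\<in>nonzero_crits. order c (pderiv f))"
      using finite that order_pderiv_ge_1 by (intro sum_strict_mono_ex1) auto
    with card sum_orders show False
      by simp
  qed
qed

lemma MULT_iff: "MULT f \<longleftrightarrow> (\<forall>c\<in>nonzero_crits. order c (pderiv f) = 1)"
proof
  show "\<forall>c\<in>nonzero_crits. order c (pderiv f) = 1" if "MULT f"
    using that order_pderiv_ge_1 by (force simp: MULT_def nonzero_crits_def crits_def zeros_def)
  show "MULT f" if "\<forall>c\<in>nonzero_crits. order c (pderiv f) = 1"
    using that by (force simp: MULT_def nonzero_crits_def crits_def zeros_def)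
qed

lemma nonzero_crits_subset_crit_noninfl:
  assumes "MULT f"
  shows "nonzero_crits \<subseteq> crit_noninfl f"
  using assms odd_order_pderiv_not_inflection_point[OF pderiv_nonzero]
  by (auto simp: MULT_iff crit_noninfl_def nonzero_crits_def crits_def)

definition bound :: real where
  "bound = 1 + (\<Sum>x\<in>zeros \<union> crits. \<bar>x\<bar>)"

lemma abs_less_bound: "x \<in> zeros \<union> crits \<Longrightarrow> \<bar>x\<bar> < bound"
  using finite_zeros finite_crits member_le_sum[of x "zeros \<union> crits" abs]
  by (simp add: bound_def)

lemma bound_pos: "bound > 0"
  unfolding bound_def by (simp add: add_pos_nonneg sum_nonneg)

lemma zero_between_bounds: "poly f x = 0 \<Longrightarrow> - bound < x \<and> x < bound"
  using abs_less_bound[of x] by (simp add: abs_less_iff zeros_def)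

lemma poly_bound_pos: "poly f bound > 0"
  using lead_coeff_pos by (rule poly_pos_right_of_roots) (auto dest: zero_between_bounds)

lemma poly_minus_bound_sign: "(-1) ^ degree f * poly f (- bound) > 0"
  using lead_coeff_pos by (rule poly_sign_left_of_roots) (auto dest: zero_between_bounds)

lemma real_rooted_nonzero_crit_is_rolle_crit:
  assumes "real_rooted f" "c \<in> nonzero_crits"
  obtains r where "r \<in> zeros" "r \<noteq> Max zeros" "c = rolle_crit r"
  using assms real_rooted_interlacing(1) by blast

lemma real_rooted_zeros_around_nonzero_crit:
  assumes "real_rooted f" "c \<in> nonzero_crits"
  shows "\<exists>r\<in>zeros. r < c" "\<exists>r\<in>zeros. c < r"
  using real_rooted_nonzero_crit_is_rolle_crit[OF assms] rolle_crit next_zero by metis+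

lemma real_rooted_zero_between_nonzero_crits:
  assumes "real_rooted f" "a \<in> nonzero_crits" "b \<in> nonzero_crits" "a < b"
  obtains r where "r \<in> zeros" "a < r" "r < b"
proof -
  obtain r s where r: "r \<in> zeros" "r \<noteq> Max zeros" "a = rolle_crit r"
    and s: "s \<in> zeros" "s \<noteq> Max zeros" "b = rolle_crit s"
    using real_rooted_nonzero_crit_is_rolle_crit[OF assms(1)] assms(2,3) by metis
  have "r < s"
    using rolle_crit_less[of s r] r s \<open>a < b\<close> by (cases r s rule: linorder_cases) auto
  then have "a < next_zero r" "next_zero r < b"
    using rolle_crit[OF r(1,2)] rolle_crit[OF s(1,2)] next_zero(3)[OF r(1,2) s(1)] r(3) s(3) by auto
  then show thesis
    using that next_zero(1)[OF r(1,2)] by blast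
qed

lemma nonzero_crit_between_bounds: "c \<in> nonzero_crits \<Longrightarrow> - bound < c \<and> c < bound"
  using abs_less_bound[of c] by (simp add: nonzero_crits_def abs_less_iff)

lemma real_rooted_zero_between_nonzero_crits_or_bounds:
  assumes "real_rooted f" "a \<in> nonzero_crits \<union> {- bound, bound}" "b \<in> nonzero_crits \<union> {- bound, bound}"
    "a < b"
  obtains r where "r \<in> zeros" "a < r" "r < b"
proof -
  have "\<exists>r\<in>zeros. a < r \<and> r < b"
  proof (cases "a \<in> nonzero_crits"; cases "b \<in> nonzero_crits")
    assume "a \<in> nonzero_crits" "b \<in> nonzero_crits"
    then show ?thesis
      using real_rooted_zero_between_nonzero_crits[OF assms(1) _ _ \<open>a < b\<close>] by metis
  next
    assume "a \<in> nonzero_crits" "b \<notin> nonzero_crits"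
    then have "b = bound"
      using assms(3,4) nonzero_crit_between_bounds[of a] by auto
    then show ?thesis
      using real_rooted_zeros_around_nonzero_crit(2)[OF assms(1) \<open>a \<in> nonzero_crits\<close>] zero_between_bounds
      by (auto simp: zeros_def)
  next
    assume "a \<notin> nonzero_crits" "b \<in> nonzero_crits"
    then have "a = - bound"
      using assms(2,4) nonzero_crit_between_bounds[of b] by auto
    then show ?thesis
      using real_rooted_zeros_around_nonzero_crit(1)[OF assms(1) \<open>b \<in> nonzero_crits\<close>] zero_between_bounds
      by (auto simp: zeros_def)
  next
    assume "a \<notin> nonzero_crits" "b \<notin> nonzero_crits"
    then have "a = - bound" "b = bound"
      using assms(2-4) bound_pos by auto
    then show ?thesis
      using real_rooted_zeros_nonempty[OF assms(1)] zero_between_bounds by (auto simp: zeros_def)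
  qed
  then show thesis
    using that by blast
qed

abbreviation k :: nat where
  "k \<equiv> card (crit_noninfl f)"

lemma alpha_less: "1 \<le> i \<Longrightarrow> i < j \<Longrightarrow> j \<le> k \<Longrightarrow> alpha f j < alpha f i"
  unfolding alpha_def using rev_sorted_list_of_set_nth_less[OF finite_crit_noninfl, of "i - 1" "j - 1"] by simp

lemma bij_betw_alpha: "bij_betw (alpha f) {1..k} (crit_noninfl f)"
proof -
  have "bij_betw (\<lambda>i. i - 1) {1..k} {..<k}"
    by (rule bij_betw_byWitness[where f' = Suc]) auto
  then have "bij_betw ((!) (rev (sorted_list_of_set (crit_noninfl f))) \<circ> (\<lambda>i. i - 1)) {1..k} (crit_noninfl f)"
    using bij_betw_rev_sorted_list_of_set_nth[OF finite_crit_noninfl] by (rule bij_betw_trans)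
  then show ?thesis
    by (simp add: alpha_def[abs_def] comp_def)
qed

lemma alpha_in_crits: "1 \<le> i \<Longrightarrow> i \<le> k \<Longrightarrow> alpha f i \<in> crits"
  using bij_betw_apply[OF bij_betw_alpha] crit_noninfl_subset_crits by auto

(* node 0 and node (k + 1) play the roles of alpha_0 = +infinity and alpha_(k+1) = -infinity:
   bound lies beyond all zeros of f and f', so there f already has the sign given by fval. *)
definition node :: "nat \<Rightarrow> real" where
  "node i = (if i = 0 then bound else if i = Suc k then - bound else alpha f i)"

lemma node_less:
  assumes "i < j" "j \<le> Suc k"
  shows "node j < node i"
proof -
  have "- bound < alpha f l \<and> alpha f l < bound" if "1 \<le> l" "l \<le> k" for l
    using abs_less_bound[of "alpha f l"] alpha_in_crits[OF that] by (simp add: abs_less_iff)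
  then show ?thesis
    using assms alpha_less[of i j] bound_pos by (auto simp: node_def)
qed

lemma crit_noninfl_not_between_nodes:
  assumes "i \<le> k" "x \<in> crit_noninfl f"
  shows "\<not> (node (Suc i) < x \<and> x < node i)"
proof -
  obtain j where j: "1 \<le> j" "j \<le> k" "x = node j"
    using assms(2) bij_betw_alpha by (force simp: bij_betw_def node_def)
  show ?thesis
  proof (cases "j \<le> i")
    case True
    then show ?thesis
      using node_less[of j i] j assms(1) by (cases "j = i") auto
  next
    case False
    then show ?thesis
      using node_less[of "Suc i" j] j by (cases "j = Suc i") auto
  qed
qed

lemma node_nonzero_crit:
  assumes "i \<le> Suc k" "poly f (node i) \<noteq> 0"
  shows "node i \<in> nonzero_crits \<union> {- bound, bound}"
  using assms alpha_in_crits[of i] by (auto simp: node_def nonzero_crits_def zeros_def)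

lemma sgn_fval: "i \<le> Suc k \<Longrightarrow> sgn (fval f i) = sgn (poly f (node i))"
  using poly_bound_pos poly_minus_bound_sign
  by (cases "even (degree f)") (auto simp: fval_def node_def zero_less_mult_iff)

lemma SIGN_iff: "SIGN f \<longleftrightarrow> (\<forall>i\<le>k. poly f (node (Suc i)) * poly f (node i) \<le> 0)"
proof -
  have "SIGN f \<longleftrightarrow> (\<forall>i\<le>k. fval f (Suc i) * fval f i \<le> 0)"
    unfolding SIGN_def
  proof (intro iffI allI impI ballI)
    show "fval f (Suc i) * fval f i \<le> 0" if "\<forall>i\<in>{1..k + 1}. fval f i * fval f (i - 1) \<le> 0" "i \<le> k" for i
      using that by force
    show "fval f i * fval f (i - 1) \<le> 0" if "\<forall>i\<le>k. fval f (Suc i) * fval f i \<le> 0" "i \<in> {1..k + 1}" for i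
      using that by (cases i) auto
  qed
  also have "\<dots> \<longleftrightarrow> (\<forall>i\<le>k. poly f (node (Suc i)) * poly f (node i) \<le> 0)"
  proof (intro all_cong imp_cong refl)
    fix i
    assume "i \<le> k"
    have "fval f (Suc i) * fval f i \<le> 0 \<longleftrightarrow> sgn (fval f (Suc i)) * sgn (fval f i) \<le> 0"
      by (simp flip: sgn_mult)
    also have "\<dots> \<longleftrightarrow> sgn (poly f (node (Suc i))) * sgn (poly f (node i)) \<le> 0"
      using \<open>i \<le> k\<close> by (simp add: sgn_fval)
    also have "\<dots> \<longleftrightarrow> poly f (node (Suc i)) * poly f (node i) \<le> 0"
      by (simp flip: sgn_mult)
    finally show "fval f (Suc i) * fval f i \<le> 0 \<longleftrightarrow> poly f (node (Suc i)) * poly f (node i) \<le> 0" .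
  qed
  finally show ?thesis .
qed

lemma even_order_zero_in_crit_noninfl:
  assumes "x \<in> zeros" "even (order x f)"
  shows "x \<in> crit_noninfl f"
proof -
  have "order x f = Suc (order x (pderiv f))"
    using assms(1) order_pderiv[OF f_nonzero] by (simp add: zeros_def)
  with assms(2) have "odd (order x (pderiv f))"
    by simp
  moreover from this have "poly (pderiv f) x = 0"
    using order_root by (metis odd_pos neq0_conv)
  ultimately show ?thesis
    using odd_order_pderiv_not_inflection_point[OF pderiv_nonzero] by (simp add: crit_noninfl_def)
qed

lemma real_rooted_imp_MULT: "real_rooted f \<Longrightarrow> MULT f"
  using real_rooted_interlacing(2) by (simp add: MULT_iff)

lemma MULT_zero_unique_in_gap:
  assumes "MULT f" "\<forall>c\<in>crit_noninfl f. \<not> (a < c \<and> c < b)"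
    and "x \<in> zeros" "a < x" "x < b" "s \<in> zeros" "a < s" "s < b"
  shows "x = s"
proof (rule ccontr)
  assume "x \<noteq> s"
  then consider "x < s" | "s < x"
    by linarith
  then obtain c where "c \<in> nonzero_crits" "a < c" "c < b"
  proof cases
    case 1
    with assms(3,6) obtain c where "c \<in> nonzero_crits" "x < c" "c < s"
      by (rule nonzero_crit_between_zeros)
    with assms(4,8) show thesis
      by (intro that[of c]) auto
  next
    case 2
    with assms(6,3) obtain c where "c \<in> nonzero_crits" "s < c" "c < x"
      by (rule nonzero_crit_between_zeros)
    with assms(5,7) show thesis
      by (intro that[of c]) auto
  qed
  then show False
    using assms(2) nonzero_crits_subset_crit_noninfl[OF assms(1)] by blast
qed

lemma real_rooted_imp_SIGN:
  assumes "real_rooted f"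
  shows "SIGN f"
  unfolding SIGN_iff
proof (intro allI impI)
  fix i
  assume "i \<le> k"
  define a b where "a = node (Suc i)" and "b = node i"
  have "a < b"
    using node_less \<open>i \<le> k\<close> by (simp add: a_def b_def)
  have gap: "\<forall>c\<in>crit_noninfl f. \<not> (a < c \<and> c < b)"
    using crit_noninfl_not_between_nodes[OF \<open>i \<le> k\<close>] by (simp add: a_def b_def)
  show "poly f a * poly f b \<le> 0"
  proof (cases "poly f a = 0 \<or> poly f b = 0")
    case True
    then show ?thesis
      by auto
  next
    case False
    then obtain s where "s \<in> zeros" "a < s" "s < b"
      using real_rooted_zero_between_nonzero_crits_or_bounds[OF assms _ _ \<open>a < b\<close>]
        node_nonzero_crit \<open>i \<le> k\<close>
      by (auto simp: a_def b_def)
    have "x = s" if "x \<in> {a..b}" "poly f x = 0" for x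
    proof (rule MULT_zero_unique_in_gap[OF real_rooted_imp_MULT[OF assms] gap _ _ _ \<open>s \<in> zeros\<close>])
      show "x \<in> zeros" "a < x" "x < b"
        using that False by (auto simp: zeros_def order.order_iff_strict)
    qed (use \<open>a < s\<close> \<open>s < b\<close> in auto)
    moreover have "odd (order s f)"
      using even_order_zero_in_crit_noninfl[OF \<open>s \<in> zeros\<close>] gap \<open>a < s\<close> \<open>s < b\<close> by blast
    ultimately show ?thesis
      using poly_sign_change_at_odd_order_root[OF f_nonzero \<open>a < s\<close> \<open>s < b\<close>] by simp
  qed
qed

lemma MULT_card_nonzero_nodes:
  assumes "MULT f"
  shows "card {i. i < Suc k \<and> poly f (node i) \<noteq> 0} = Suc (card nonzero_crits)"
proof -
  have "{i. i < Suc k \<and> poly f (node i) \<noteq> 0} = insert 0 {i \<in> {1..k}. poly f (alpha f i) \<noteq> 0}"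
    using poly_bound_pos by (auto simp: node_def less_Suc_eq_le)
  moreover have "inj_on (alpha f) {i \<in> {1..k}. poly f (alpha f i) \<noteq> 0}"
    by (rule inj_on_subset[OF bij_betw_imp_inj_on[OF bij_betw_alpha]]) auto
  moreover have "alpha f ` {i \<in> {1..k}. poly f (alpha f i) \<noteq> 0} = {c \<in> alpha f ` {1..k}. poly f c \<noteq> 0}"
    by blast
  moreover have "alpha f ` {1..k} = crit_noninfl f"
    using bij_betw_alpha by (simp add: bij_betw_def)
  moreover have "{c \<in> crit_noninfl f. poly f c \<noteq> 0} = nonzero_crits"
    using nonzero_crits_subset_crit_noninfl[OF assms] crit_noninfl_subset_crits
    by (auto simp: nonzero_crits_def zeros_def)
  ultimately show ?thesis
    by (simp flip: card_image)
qed

lemma SIGN_MULT_imp_real_rooted: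
  assumes "SIGN f" "MULT f"
  shows "real_rooted f"
proof -
  have "Suc (card nonzero_crits) \<le> card ({node (Suc k)..<node 0} \<inter> {t. poly f t = 0})"
    unfolding MULT_card_nonzero_nodes[OF assms(2), symmetric]
  proof (rule card_nonzero_nodes_le_card_roots[OF f_nonzero])
    show "node j < node i" if "i < j" "j \<le> Suc k" for i j
      using that by (rule node_less)
    show "poly f (node (Suc i)) * poly f (node i) \<le> 0" if "i < Suc k" for i
      using assms(1) that by (simp add: SIGN_iff)
  qed
  also have "\<dots> \<le> card zeros"
    using finite_zeros by (intro card_mono) (auto simp: zeros_def)
  finally have "card nonzero_crits < card zeros"
    by simp
  moreover have "(\<Sum>c\<in>nonzero_crits. order c (pderiv f)) = card nonzero_crits"
    using assms(2) by (simp add: MULT_iff)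
  ultimately have "(\<Sum>x\<in>zeros. order x f) \<ge> degree f"
    using sum_order_zeros_nonzero_crits by linarith
  then show ?thesis
    using sum_order_real_roots_le_degree[OF f_nonzero] by (simp add: real_rooted_iff_sum_order_zeros zeros_def)
qed

lemma real_rooted_zero_le_crit:
  assumes "real_rooted f" "c \<in> crits"
  obtains r where "r \<in> zeros" "r \<le> c"
proof (cases "c \<in> zeros")
  case False
  then have "c \<in> nonzero_crits"
    using assms(2) by (simp add: nonzero_crits_def)
  then obtain r where "r \<in> zeros" "r < c"
    using real_rooted_zeros_around_nonzero_crit(1)[OF assms(1)] by blast
  then show thesis
    using that by simp
qed (use that in blast)

lemma real_rooted_zero_below_crits_simple_and_unique:
  assumes "real_rooted f" "\<forall>c\<in>crits. a \<le> c" "x \<in> zeros" "x < a"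
  obtains r where "r \<in> zeros" "r < a" "order r f = 1" "\<And>y. y \<in> zeros \<Longrightarrow> y \<le> a \<Longrightarrow> y = r"
proof -
  define r where "r = Min zeros"
  have "r \<in> zeros"
    unfolding r_def using finite_zeros assms(3) by (intro Min_in) auto
  have r_le: "r \<le> y" if "y \<in> zeros" for y
    unfolding r_def using finite_zeros that by simp
  have "r < a"
    using r_le[OF assms(3)] assms(4) by simp
  have "order r (pderiv f) = 0"
    using assms(2) \<open>r < a\<close> order_root[of "pderiv f" r] pderiv_nonzero by (force simp: crits_def)
  then have "order r f = 1"
    using \<open>r \<in> zeros\<close> order_pderiv[OF f_nonzero] by (simp add: zeros_def)
  have "r \<noteq> Max zeros"
  proof
    assume "r = Max zeros"
    then have "zeros = {r}"
      using r_le finite_zeros \<open>r \<in> zeros\<close> by (auto intro: antisym)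
    then show False
      using \<open>order r f = 1\<close> assms(1) degree_gt_1 by (simp add: real_rooted_iff_sum_order_zeros)
  qed
  have "a \<le> rolle_crit r"
    using rolle_crit(1)[OF \<open>r \<in> zeros\<close> \<open>r \<noteq> Max zeros\<close>] assms(2) by (simp add: nonzero_crits_def)
  then have "a < next_zero r"
    using rolle_crit(3)[OF \<open>r \<in> zeros\<close> \<open>r \<noteq> Max zeros\<close>] by linarith
  have "y = r" if "y \<in> zeros" "y \<le> a" for y
  proof -
    have "\<not> r < y"
      using next_zero(3)[OF \<open>r \<in> zeros\<close> \<open>r \<noteq> Max zeros\<close> that(1)] \<open>a < next_zero r\<close> that(2) by force
    with r_le[OF that(1)] show "y = r"
      by simp
  qed
  with \<open>r \<in> zeros\<close> \<open>r < a\<close> \<open>order r f = 1\<close> show thesis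
    using that by blast
qed

lemma real_rooted_sign_neg_if_zero_below_crits:
  assumes "real_rooted f" "\<forall>c\<in>crits. a \<le> c" "x \<in> zeros" "x < a"
  shows "(-1) ^ degree f * poly f a < 0"
proof -
  obtain r where "r \<in> zeros" "r < a" "order r f = 1" and unique: "\<And>y. y \<in> zeros \<Longrightarrow> y \<le> a \<Longrightarrow> y = r"
    by (rule real_rooted_zero_below_crits_simple_and_unique[OF assms]) blast
  have "- bound < r"
    using zero_between_bounds \<open>r \<in> zeros\<close> by (simp add: zeros_def)
  then have "poly f (- bound) * poly f a < 0"
    using unique \<open>r < a\<close> \<open>order r f = 1\<close>
    by (intro poly_sign_change_at_odd_order_root[OF f_nonzero]) (auto simp: zeros_def)
  then have "((-1) ^ degree f * poly f (- bound)) * ((-1) ^ degree f * poly f a) < 0"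
    by (simp add: algebra_simps flip: power_mult_distrib)
  with poly_minus_bound_sign show ?thesis
    by (metis mult_nonneg_nonneg less_imp_le not_less)
qed

lemma real_rooted_zeros_ge_iff:
  assumes "real_rooted f"
  shows "(\<forall>x\<in>zeros. a \<le> x) \<longleftrightarrow> (\<forall>c\<in>crits. a \<le> c) \<and> (-1) ^ degree f * poly f a \<ge> 0"
proof
  assume zeros_ge: "\<forall>x\<in>zeros. a \<le> x"
  have "a \<le> c" if c: "c \<in> crits" for c
  proof -
    obtain r where "r \<in> zeros" "r \<le> c"
      using real_rooted_zero_le_crit[OF assms c] by blast
    with zeros_ge show ?thesis
      by force
  qed
  moreover have "(-1) ^ degree f * poly f a \<ge> 0"
  proof (cases "poly f a = 0")
    case False
    with zeros_ge have "\<forall>x\<le>a. poly f x \<noteq> 0"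
      by (force simp: zeros_def)
    then show ?thesis
      using poly_sign_left_of_roots[OF lead_coeff_pos] by (simp add: less_imp_le)
  qed simp
  ultimately show "(\<forall>c\<in>crits. a \<le> c) \<and> (-1) ^ degree f * poly f a \<ge> 0"
    by blast
next
  assume crits_sign: "(\<forall>c\<in>crits. a \<le> c) \<and> (-1) ^ degree f * poly f a \<ge> 0"
  show "\<forall>x\<in>zeros. a \<le> x"
  proof (rule ballI, rule ccontr)
    fix x
    assume "x \<in> zeros" "\<not> a \<le> x"
    then have "(-1) ^ degree f * poly f a < 0"
      using crits_sign by (intro real_rooted_sign_neg_if_zero_below_crits[OF assms]) auto
    with crits_sign show False
      by simp
  qed
qed

lemma real_rooted_zeros_gt_iff:
  assumes "real_rooted f"
  shows "(\<forall>x\<in>zeros. a < x) \<longleftrightarrow> (\<forall>c\<in>crits. a < c) \<and> (-1) ^ degree f * poly f a > 0"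
proof
  assume zeros_gt: "\<forall>x\<in>zeros. a < x"
  then have "\<forall>x\<le>a. poly f x \<noteq> 0"
    by (force simp: zeros_def)
  moreover have "a < c" if c: "c \<in> crits" for c
  proof -
    obtain r where "r \<in> zeros" "r \<le> c"
      using real_rooted_zero_le_crit[OF assms c] by blast
    with zeros_gt show ?thesis
      by force
  qed
  ultimately show "(\<forall>c\<in>crits. a < c) \<and> (-1) ^ degree f * poly f a > 0"
    using poly_sign_left_of_roots[OF lead_coeff_pos] by blast
next
  assume "(\<forall>c\<in>crits. a < c) \<and> (-1) ^ degree f * poly f a > 0"
  then have "\<forall>x\<in>zeros. a \<le> x" "poly f a \<noteq> 0"
    using real_rooted_zeros_ge_iff[OF assms] by auto
  then show "\<forall>x\<in>zeros. a < x"
    by (force simp: zeros_def order.order_iff_strict)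
qed

end

theorem propositionA3:
  fixes f :: "real poly"
  assumes deg: "degree f > 1"
    and lc: "lead_coeff f > 0"
    and dreal: "\<forall>z::complex. poly (map_poly complex_of_real (pderiv f)) z = 0 \<longrightarrow> z \<in> \<real>"
  shows "((\<forall>z::complex. poly (map_poly complex_of_real f) z = 0 \<longrightarrow> z \<in> \<real>)
            \<longleftrightarrow> SIGN f \<and> MULT f)
       \<and> ((\<forall>z::complex. poly (map_poly complex_of_real f) z = 0 \<longrightarrow> z \<in> \<real> \<and> Re z \<ge> 0)
            \<longleftrightarrow> SIGN f \<and> MULT f \<and> (\<forall>x::real. poly (pderiv f) x = 0 \<longrightarrow> x \<ge> 0)
                \<and> (-1) ^ degree f * poly f 0 \<ge> 0)
       \<and> ((\<forall>z::complex. poly (map_poly complex_of_real f) z = 0 \<longrightarrow> z \<in> \<real> \<and> Re z > 0)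
            \<longleftrightarrow> SIGN f \<and> MULT f \<and> (\<forall>x::real. poly (pderiv f) x = 0 \<longrightarrow> x > 0)
                \<and> (-1) ^ degree f * poly f 0 > 0)"
proof -
  interpret real_rooted_derivative f
    using assms by unfold_locales (simp_all add: real_rooted_def)
  have a: "real_rooted f \<longleftrightarrow> SIGN f \<and> MULT f"
    using real_rooted_imp_SIGN real_rooted_imp_MULT SIGN_MULT_imp_real_rooted by blast
  have b: "real_rooted f \<and> (\<forall>x. poly f x = 0 \<longrightarrow> 0 \<le> x) \<longleftrightarrow>
      real_rooted f \<and> (\<forall>x. poly (pderiv f) x = 0 \<longrightarrow> 0 \<le> x) \<and> (-1) ^ degree f * poly f 0 \<ge> 0"
    using real_rooted_zeros_ge_iff[of 0] by (auto simp: zeros_def crits_def)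
  have c: "real_rooted f \<and> (\<forall>x. poly f x = 0 \<longrightarrow> 0 < x) \<longleftrightarrow>
      real_rooted f \<and> (\<forall>x. poly (pderiv f) x = 0 \<longrightarrow> 0 < x) \<and> (-1) ^ degree f * poly f 0 > 0"
    using real_rooted_zeros_gt_iff[of 0] by (auto simp: zeros_def crits_def)
  show ?thesis
    using a b c complex_roots_real_and_iff[of f "\<lambda>x. 0 \<le> x"] complex_roots_real_and_iff[of f "\<lambda>x. 0 < x"]
    unfolding real_rooted_def by blast
qed

end
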